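(* Let $A$ be a finite nonempty set, $f\in\mathrm{Op}(A)$ and let $\rho$ be a generalized quasiorder on $A$. Then $f$ preserves $\rho$ if and only if every translation $g\in\mathrm{trl}(f)$ preserves $\rho$. Consequently, $\mathrm{Pol}\,\rho=(\mathrm{End}\,\rho)^{*}$.
   Context: $\mathrm{Op}(A)$ is the set of all operations $f:A^n\to A$, $n\ge1$. An $n$-ary $f$ preserves an $m$-ary relation $\rho$ if for all $r_1,\dots,r_n\in\rho$ the tuple obtained by applying $f$ componentwise, $(f(r_1(1),\dots,r_n(1)),\dots,f(r_1(m),\dots,r_n(m)))$, lies in $\rho$. $\mathrm{Pol}\,\rho$ is the set of all operations preserving $\rho$, $\mathrm{End}\,\rho$ the set of unary ones. For $n$-ary $f$, a translation is a unary map $x\mapsto f(a_1,\dots,a_{i-1},x,a_{i+1},\dots,a_n)$ with fixed $a_j\in A$; $\mathrm{trl}(f)$ is the set of all translations (for unary $f$, $\mathrm{trl}(f)=\{f\}$). For $M\subseteq A^A$, $M^*:=\{f\in\mathrm{Op}(A)\mid\mathrm{trl}(f)\subseteq M\}$. An $m$-ary relation $\rho$ is a generalized quasiorder if it is reflexive ($(a,\dots,a)\in\rho$ for all $a$) and transitive: for every $m\times m$-matrix $(a_{ij})$ over $A$ all of whose rows and columns belong to $\rho$, the diagonal $(a_{11},\dots,a_{mm})$ belongs to $\rho$. *)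

theory Defs
  imports Main
begin

(* The base set A is the (finite, automatically nonempty) universe of a type 'a::finite.
   An n-ary operation is a pair (n, f) with n >= 1 and f :: (nat => 'a) => 'a depending only
   on its first n arguments (argument tuples are functions from {0..<n}).
   An m-ary relation is a set of lists of length m. *)

definition Op :: "(nat \<times> ((nat \<Rightarrow> 'a) \<Rightarrow> 'a)) set" where
  "Op = {(n, f). n \<ge> 1 \<and> (\<forall>x y. (\<forall>i<n. x i = y i) \<longrightarrow> f x = f y)}"

definition preserves :: "nat \<Rightarrow> ((nat \<Rightarrow> 'a) \<Rightarrow> 'a) \<Rightarrow> nat \<Rightarrow> 'a list set \<Rightarrow> bool" where
  "preserves n f m \<rho> \<longleftrightarrow>
     (\<forall>r :: nat \<Rightarrow> 'a list. (\<forall>i<n. r i \<in> \<rho>) \<longrightarrow>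
        map (\<lambda>j. f (\<lambda>i. r i ! j)) [0..<m] \<in> \<rho>)"

definition Pol :: "nat \<Rightarrow> 'a list set \<Rightarrow> (nat \<times> ((nat \<Rightarrow> 'a) \<Rightarrow> 'a)) set" where
  "Pol m \<rho> = {(n, f) \<in> Op. preserves n f m \<rho>}"

definition End :: "nat \<Rightarrow> 'a list set \<Rightarrow> ('a \<Rightarrow> 'a) set" where
  "End m \<rho> = {g. preserves 1 (\<lambda>x. g (x 0)) m \<rho>}"

definition trl :: "nat \<Rightarrow> ((nat \<Rightarrow> 'a) \<Rightarrow> 'a) \<Rightarrow> ('a \<Rightarrow> 'a) set" where
  "trl n f = {(\<lambda>x. f (a(i := x))) | a i. i < n}"

definition star :: "('a \<Rightarrow> 'a) set \<Rightarrow> (nat \<times> ((nat \<Rightarrow> 'a) \<Rightarrow> 'a)) set" where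
  "star M = {(n, f) \<in> Op. trl n f \<subseteq> M}"

definition reflexive_rel :: "nat \<Rightarrow> 'a list set \<Rightarrow> bool" where
  "reflexive_rel m \<rho> \<longleftrightarrow> (\<forall>a. replicate m a \<in> \<rho>)"

definition transitive_rel :: "nat \<Rightarrow> 'a list set \<Rightarrow> bool" where
  "transitive_rel m \<rho> \<longleftrightarrow>
     (\<forall>M :: nat \<Rightarrow> nat \<Rightarrow> 'a.
        (\<forall>i<m. map (\<lambda>j. M i j) [0..<m] \<in> \<rho>) \<longrightarrow>
        (\<forall>j<m. map (\<lambda>i. M i j) [0..<m] \<in> \<rho>) \<longrightarrow>
        map (\<lambda>i. M i i) [0..<m] \<in> \<rho>)"

definition gen_quasiorder :: "nat \<Rightarrow> 'a list set \<Rightarrow> bool" where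
  "gen_quasiorder m \<rho> \<longleftrightarrow> reflexive_rel m \<rho> \<and> transitive_rel m \<rho>"

end

theory Submission
  imports Defs
begin

text \<open>If f preserves \<rho>, so does each of its translations, because constant tuples lie in \<rho>
  by reflexivity. Conversely, suppose all translations preserve \<rho> and let r_0, ..., r_(n-1) \<in> \<rho>.
  Substitute the r_i for the arguments of f one at a time. When argument k is substituted,
  the m \<times> m matrix M p q = f(r_0(q), ..., r_(k-1)(q), r_k(p), a_(k+1), ...) has its rows in \<rho>
  by the previous step and its columns in \<rho> because they are images of r_k under translations;
  transitivity puts its diagonal in \<rho>, which is the next step.\<close>

lemma End_iff: "g \<in> End m \<rho> \<longleftrightarrow> (\<forall>r\<in>\<rho>. map (\<lambda>j. g (r ! j)) [0..<m] \<in> \<rho>)"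
proof
  assume "g \<in> End m \<rho>"
  then show "\<forall>r\<in>\<rho>. map (\<lambda>j. g (r ! j)) [0..<m] \<in> \<rho>"
    unfolding End_def preserves_def by (auto dest: spec[of _ "\<lambda>_. _"])
next
  assume "\<forall>r\<in>\<rho>. map (\<lambda>j. g (r ! j)) [0..<m] \<in> \<rho>"
  then show "g \<in> End m \<rho>"
    unfolding End_def preserves_def by simp
qed

lemma translation_in_End:
  assumes refl: "reflexive_rel m \<rho>" and pres: "preserves n f m \<rho>" and "i < n"
  shows "(\<lambda>x. f (a(i := x))) \<in> End m \<rho>"
  unfolding End_iff
proof
  fix r assume "r \<in> \<rho>"
  define R where "R k = (if k = i then r else replicate m (a k))" for k
  have "\<forall>k<n. R k \<in> \<rho>"
    using \<open>r \<in> \<rho>\<close> refl unfolding R_def reflexive_rel_def by auto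
  then have "map (\<lambda>j. f (\<lambda>k. R k ! j)) [0..<m] \<in> \<rho>"
    using pres unfolding preserves_def by blast
  moreover have "map (\<lambda>j. f (\<lambda>k. R k ! j)) [0..<m] = map (\<lambda>j. f (a(i := r ! j))) [0..<m]"
  proof (rule map_cong)
    fix j assume "j \<in> set [0..<m]"
    then have "(\<lambda>k. R k ! j) = a(i := r ! j)"
      by (auto simp: R_def)
    then show "f (\<lambda>k. R k ! j) = f (a(i := r ! j))"
      by simp
  qed simp
  ultimately show "map (\<lambda>j. f (a(i := r ! j))) [0..<m] \<in> \<rho>"
    by simp
qed

lemma substitute_prefix_in_rel:
  assumes quasi: "gen_quasiorder m \<rho>"
    and trl: "trl n f \<subseteq> End m \<rho>" and r: "\<forall>i<n. r i \<in> \<rho>" and "k \<le> n"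
  shows "map (\<lambda>j. f (\<lambda>i. if i < k then r i ! j else a i)) [0..<m] \<in> \<rho>"
  using \<open>k \<le> n\<close>
proof (induction k arbitrary: a)
  case 0
  then show ?case
    using quasi by (simp add: gen_quasiorder_def reflexive_rel_def map_replicate_const)
next
  case (Suc k)
  then have "k < n" by simp
  define M where "M p q = f (\<lambda>i. if i < k then r i ! q else (a(k := r k ! p)) i)" for p q
  have rows: "\<forall>p<m. map (M p) [0..<m] \<in> \<rho>"
    using Suc.IH \<open>k < n\<close> unfolding M_def by simp
  have cols: "\<forall>q<m. map (\<lambda>p. M p q) [0..<m] \<in> \<rho>"
  proof (intro allI impI)
    fix q
    define b where "b i = (if i < k then r i ! q else a i)" for i
    have "(\<lambda>x. f (b(k := x))) \<in> End m \<rho>"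
      using trl \<open>k < n\<close> unfolding trl_def by blast
    then have "map (\<lambda>p. f (b(k := r k ! p))) [0..<m] \<in> \<rho>"
      using r \<open>k < n\<close> unfolding End_iff by blast
    moreover have "b(k := x) = (\<lambda>i. if i < k then r i ! q else (a(k := x)) i)" for x
      by (auto simp: b_def)
    ultimately show "map (\<lambda>p. M p q) [0..<m] \<in> \<rho>"
      unfolding M_def by simp
  qed
  have "map (\<lambda>p. M p p) [0..<m] \<in> \<rho>"
    using quasi rows cols unfolding gen_quasiorder_def transitive_rel_def by blast
  moreover have "(\<lambda>i. if i < k then r i ! q else (a(k := r k ! q)) i)
               = (\<lambda>i. if i < Suc k then r i ! q else a i)" for q
    by (auto simp: less_Suc_eq)
  ultimately show ?case
    unfolding M_def by simp
qed

lemma preserves_iff_translations_in_End: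
  assumes "gen_quasiorder m \<rho>" and "(n, f) \<in> Op"
  shows "preserves n f m \<rho> \<longleftrightarrow> trl n f \<subseteq> End m \<rho>"
proof
  assume "preserves n f m \<rho>"
  moreover have "reflexive_rel m \<rho>"
    using assms(1) unfolding gen_quasiorder_def by simp
  ultimately show "trl n f \<subseteq> End m \<rho>"
    unfolding trl_def by (auto intro: translation_in_End)
next
  assume trl: "trl n f \<subseteq> End m \<rho>"
  show "preserves n f m \<rho>"
    unfolding preserves_def
  proof (intro allI impI)
    fix r :: "nat \<Rightarrow> 'a list"
    assume "\<forall>i<n. r i \<in> \<rho>"
    then have "map (\<lambda>j. f (\<lambda>i. if i < n then r i ! j else undefined)) [0..<m] \<in> \<rho>"
      using substitute_prefix_in_rel[OF assms(1) trl, where k = n and a = "\<lambda>_. undefined"]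
      by simp
    moreover have "f (\<lambda>i. if i < n then r i ! j else undefined) = f (\<lambda>i. r i ! j)" for j
      using assms(2) unfolding Op_def by auto
    ultimately show "map (\<lambda>j. f (\<lambda>i. r i ! j)) [0..<m] \<in> \<rho>"
      by simp
  qed
qed

theorem theorem3p7:
  fixes \<rho> :: "('a::finite) list set" and m :: nat
  assumes "\<rho> \<subseteq> {xs. length xs = m}"
    and "gen_quasiorder m \<rho>"
  shows "(\<forall>n f. (n, f) \<in> (Op :: (nat \<times> ((nat \<Rightarrow> 'a) \<Rightarrow> 'a)) set) \<longrightarrow>
            (preserves n f m \<rho> \<longleftrightarrow> (\<forall>g \<in> trl n f. g \<in> End m \<rho>)))
         \<and> Pol m \<rho> = star (End m \<rho>)"
proof -
  have "\<forall>n f. (n, f) \<in> (Op :: (nat \<times> ((nat \<Rightarrow> 'a) \<Rightarrow> 'a)) set) \<longrightarrow>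
          (preserves n f m \<rho> \<longleftrightarrow> trl n f \<subseteq> End m \<rho>)"
    using preserves_iff_translations_in_End[OF assms(2)] by blast
  moreover from this have "Pol m \<rho> = star (End m \<rho>)"
    unfolding Pol_def star_def by blast
  ultimately show ?thesis
    by blast
qed

end
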